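(* Consider the upper-bound type system, and assume the program is well-typed w.r.t. the signature $\Sigma$ in that system. If $\models E:\Gamma$, $E\vdash e\Downarrow v$, and $\Sigma;\Gamma\vdash^{q}_{q'}e:A$ is derivable in the upper-bound type system, then for all $p,r\in\mathbb Q_{\ge0}$ with $p\ge q+\Phi_E(\Gamma)+r$ there exists $p'\in\mathbb Q_{\ge0}$ such that $E\vdash^{p}_{p'}e\Downarrow v$ and $p'\ge q'+\Phi(v:A)+r$.
   Context: Base types: $T ::= \mathsf{unit}\mid\mathsf{bool}\mid\mathsf{int}\mid L(T)\mid T*T$. Values: $v ::= () \mid \mathsf{true}\mid\mathsf{false}\mid n\ (n\in\mathbb Z)\mid [v_1,\dots,v_n]\ (n\ge 0$, the empty list being $\mathsf{nil})\mid (v_1,v_2)$. Value typing $\models v:T$: $()$ has type $\mathsf{unit}$, booleans have type $\mathsf{bool}$, integers have type $\mathsf{int}$, $(v_1,v_2):T_1*T_2$ if $\models v_i:T_i$, and $[v_1,\dots,v_n]:L(T)$ if every $\models v_i:T$ (so $\mathsf{nil}$ has every list type). Expressions (let-normal form; $x,x_i$ are variables, $f$ function identifiers): $e ::= () \mid \mathsf{true}\mid \mathsf{false}\mid n\mid x\mid \mathrm{op}_\diamond(x_1,x_2)\mid \mathrm{app}(f,x)\mid \mathrm{if}(x,e_t,e_f)\mid \mathrm{let}(x,e_1,x.e_2)\mid \mathrm{pair}(x_1,x_2)\mid \mathrm{match}(x,(x_1,x_2).e)\mid \mathsf{nil}\mid \mathrm{cons}(x_1,x_2)\mid\mathrm{match}(x,e_1,(x_h,x_t).e_2)\mid\mathrm{share}(x,(x_1,x_2).e)$,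 with $\diamond\in\{+,-,*,\mathrm{div},\mathrm{mod},=,<>,<,>,\mathrm{and},\mathrm{or}\}$. A program fixes for each function identifier $f$ a body $e_f$ with a single parameter variable $y^f$. An environment $E$ is a finite map from variables to values. Cost semantics: fix arbitrary rational constants $K^{\mathrm{unit}},K^{\mathrm{bool}},K^{\mathrm{int}},K^{\mathrm{nil}},K^{\mathrm{var}},K^{\mathrm{op}},K^{\mathrm{app}},K^{\mathrm{let}},K^{\mathrm{cond}},K^{\mathrm{pair}},K^{\mathrm{matchP}},K^{\mathrm{cons}},K^{\mathrm{matchN}},K^{\mathrm{matchL}}$. The judgement $E\vdash^{q}_{q'} e\Downarrow v$ (all counters $q,q'$ occurring in derivations are in $\mathbb Q_{\ge0}$) is defined inductively: $E\vdash^{q+K^{c}}_{q}c\Downarrow c$ for constants $c\in\{(),\mathsf{true},\mathsf{false},n,\mathsf{nil}\}$ with the corresponding constant $K^{\mathrm{unit}},K^{\mathrm{bool}},K^{\mathrm{int}},K^{\mathrm{nil}}$; $E\vdash^{q+K^{\mathrm{var}}}_q x\Downarrow E(x)$ for $x\in\mathrm{dom}(E)$; $E\vdash^{q+K^{\mathrm{op}}}_q\mathrm{op}_\diamond(x_1,x_2)\Downarrow E(x_1)\diamond E(x_2)$; $E\vdash^{q+K^{\mathrm{pair}}}_q \mathrm{pair}(x_1,x_2)\Downarrow (E(x_1),E(x_2))$; $E\vdash^{q+K^{\mathrm{cons}}}_q\mathrm{cons}(x_h,x_t)\Downarrow[v_1,\dots,v_n]$ if $E(x_h)=v_1$ and $E(x_t)=[v_2,\dots,v_n]$;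 if $E[y^f\mapsto E(x)]\vdash^q_{q'}e_f\Downarrow v$ then $E\vdash^{q+K^{\mathrm{app}}}_{q'}\mathrm{app}(f,x)\Downarrow v$; if $E\vdash^{q-K^{\mathrm{let}}}_{q_1}e_1\Downarrow v_1$ and $E[x\mapsto v_1]\vdash^{q_1}_{q'}e_2\Downarrow v$ then $E\vdash^q_{q'}\mathrm{let}(x,e_1,x.e_2)\Downarrow v$; if $E(x)=\mathsf{true}$ and $E\vdash^{q-K^{\mathrm{cond}}}_{q'}e_t\Downarrow v$ (resp. $E(x)=\mathsf{false}$ and $E\vdash^{q-K^{\mathrm{cond}}}_{q'}e_f\Downarrow v$) then $E\vdash^q_{q'}\mathrm{if}(x,e_t,e_f)\Downarrow v$; if $E(x)=(v_1,v_2)$ and $E[x_1\mapsto v_1,x_2\mapsto v_2]\vdash^{q-K^{\mathrm{matchP}}}_{q'}e\Downarrow v$ then $E\vdash^q_{q'}\mathrm{match}(x,(x_1,x_2).e)\Downarrow v$; if $E(x)=\mathsf{nil}$ and $E\vdash^{q-K^{\mathrm{matchN}}}_{q'}e_1\Downarrow v$ then $E\vdash^q_{q'}\mathrm{match}(x,e_1,(x_h,x_t).e_2)\Downarrow v$; if $E(x)=[v_1,\dots,v_n]$ with $n\ge1$ and $E[x_h\mapsto v_1,x_t\mapsto[v_2,\dots,v_n]]\vdash^{q-K^{\mathrm{matchL}}}_{q'}e_2\Downarrow v$ then $E\vdash^q_{q'}\mathrm{match}(x,e_1,(x_h,x_t).e_2)\Downarrow v$; if $E(x)=v_1$ and $(E\setminus\{x\})[x_1\mapsto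 v_1,x_2\mapsto v_1]\vdash^q_{q'}e\Downarrow v$ then $E\vdash^q_{q'}\mathrm{share}(x,(x_1,x_2).e)\Downarrow v$. We write $E\vdash e\Downarrow v$ if $E\vdash^q_{q'}e\Downarrow v$ for some $q,q'$. Resource-annotated types: $A ::= \mathsf{unit}\mid\mathsf{bool}\mid\mathsf{int}\mid L^p(A)\mid A*A$ with $p\in\mathbb Q_{\ge0}$; $|A|$ denotes the base type obtained by erasing annotations. An annotated context $\Gamma$ is a finite map from variables to annotated types; $\Gamma_1,\Gamma_2$ denotes the union of contexts with disjoint domains (contexts are unordered). $\models E:\Gamma$ means $\models E(x):|\Gamma(x)|$ for all $x\in\mathrm{dom}(\Gamma)$. Potential: $\Phi(v:A)=0$ for $A\in\{\mathsf{unit},\mathsf{bool},\mathsf{int}\}$; $\Phi((v_1,v_2):A_1*A_2)=\Phi(v_1:A_1)+\Phi(v_2:A_2)$; $\Phi([v_1,\dots,v_n]:L^p(A))=n\cdot p+\sum_{i=1}^n\Phi(v_i:A)$; $\Phi_E(\Gamma)=\sum_{x\in\mathrm{dom}(\Gamma)}\Phi(E(x):\Gamma(x))$. Sharing relation: $\curlyvee(A\mid A,A)$ for $A\in\{\mathsf{unit},\mathsf{bool},\mathsf{int}\}$; $\curlyvee(A*B\mid A_1*B_1,A_2*B_2)$ if $\curlyvee(A\mid A_1,A_2)$ and $\curlyvee(B\mid B_1,B_2)$; $\curlyvee(L^p(A)\mid L^{p_1}(A_1),L^{p_2}(A_2))$ if $\curlyvee(A\mid A_1,A_2)$ and $p=p_1+p_2$.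 Subtyping $\preceq$: $A\preceq A$ for atoms; $L^{p_1}(A_1)\preceq L^{p_2}(A_2)$ if $A_1\preceq A_2$ and $p_1\le p_2$; $A_1*B_1\preceq A_2*B_2$ if $A_1\preceq A_2$ and $B_1\preceq B_2$. A signature $\Sigma$ maps function identifiers to nonempty sets of annotated function types $A_1\xrightarrow{q/q'}A_2$ ($q,q'\in\mathbb Q_{\ge0}$). Typing judgements $\Sigma;\Gamma\vdash^{q}_{q'}e:A$ with $q,q'\in\mathbb Q_{\ge0}$ (every annotation in a rule instance must be a nonnegative rational). Syntax-directed rules: $\Sigma;\emptyset\vdash^{K^{\mathrm{unit}}}_0():\mathsf{unit}$; $\Sigma;\emptyset\vdash^{K^{\mathrm{bool}}}_0 b:\mathsf{bool}$; $\Sigma;\emptyset\vdash^{K^{\mathrm{int}}}_0 n:\mathsf{int}$; $\Sigma;\emptyset\vdash^{K^{\mathrm{nil}}}_0\mathsf{nil}:L^p(A)$; $\Sigma;x:A\vdash^{K^{\mathrm{var}}}_0x:A$; $\Sigma;x_1:\mathsf{bool},x_2:\mathsf{bool}\vdash^{K^{\mathrm{op}}}_0\mathrm{op}_\diamond(x_1,x_2):\mathsf{bool}$ for $\diamond\in\{\mathrm{and},\mathrm{or}\}$; $\Sigma;x_1:\mathsf{int},x_2:\mathsf{int}\vdash^{K^{\mathrm{op}}}_0\mathrm{op}_\diamond(x_1,x_2):\mathsf{bool}$ for comparisons and $:\mathsf{int}$ for $+,-,*,\mathrm{div},\mathrm{mod}$; if $A_1\xrightarrow{q/q'}A_2\in\Sigma(f)$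 then $\Sigma;x:A_1\vdash^{q+K^{\mathrm{app}}}_{q'}\mathrm{app}(f,x):A_2$; from $\Sigma;\Gamma_1\vdash^{q-K^{\mathrm{let}}}_{q_1}e_1:A_1$ and $\Sigma;\Gamma_2,x:A_1\vdash^{q_1}_{q'}e_2:A_2$ infer $\Sigma;\Gamma_1,\Gamma_2\vdash^q_{q'}\mathrm{let}(x,e_1,x.e_2):A_2$; from $\Sigma;\Gamma\vdash^{q-K^{\mathrm{cond}}}_{q'}e_t:A$ and $\Sigma;\Gamma\vdash^{q-K^{\mathrm{cond}}}_{q'}e_f:A$ infer $\Sigma;\Gamma,x:\mathsf{bool}\vdash^q_{q'}\mathrm{if}(x,e_t,e_f):A$; $\Sigma;x_1:A_1,x_2:A_2\vdash^{K^{\mathrm{pair}}}_0\mathrm{pair}(x_1,x_2):A_1*A_2$; from $\Sigma;\Gamma,x_1:A_1,x_2:A_2\vdash^{q-K^{\mathrm{matchP}}}_{q'}e:A$ infer $\Sigma;\Gamma,x:A_1*A_2\vdash^q_{q'}\mathrm{match}(x,(x_1,x_2).e):A$; $\Sigma;x_h:A,x_t:L^p(A)\vdash^{p+K^{\mathrm{cons}}}_0\mathrm{cons}(x_h,x_t):L^p(A)$; from $\Sigma;\Gamma\vdash^{q-K^{\mathrm{matchN}}}_{q'}e_1:B$ and $\Sigma;\Gamma,x_h:A,x_t:L^p(A)\vdash^{q+p-K^{\mathrm{matchL}}}_{q'}e_2:B$ infer $\Sigma;\Gamma,x:L^p(A)\vdash^q_{q'}\mathrm{match}(x,e_1,(x_h,x_t).e_2):B$;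 from $\Sigma;\Gamma,x_1:A_1,x_2:A_2\vdash^q_{q'}e:B$ and $\curlyvee(A\mid A_1,A_2)$ infer $\Sigma;\Gamma,x:A\vdash^q_{q'}\mathrm{share}(x,(x_1,x_2).e):B$. Structural rules of the upper-bound system: (Relax) from $\Sigma;\Gamma\vdash^p_{p'}e:A$, $q\ge p$ and $q-p\ge q'-p'$ infer $\Sigma;\Gamma\vdash^q_{q'}e:A$; (Weakening) from $\Sigma;\Gamma\vdash^q_{q'}e:B$ infer $\Sigma;\Gamma,x:A\vdash^q_{q'}e:B$ for any $A$; (Subtype) from $\Sigma;\Gamma\vdash^q_{q'}e:A$ and $B\preceq A$ infer $\Sigma;\Gamma\vdash^q_{q'}e:B$; (Supertype) from $\Sigma;\Gamma,x:B\vdash^q_{q'}e:C$ and $B\preceq A$ infer $\Sigma;\Gamma,x:A\vdash^q_{q'}e:C$. The program is well-typed w.r.t. $\Sigma$ in this system if for every $f$ and every $A_1\xrightarrow{q/q'}A_2\in\Sigma(f)$, $\Sigma;y^f:A_1\vdash^q_{q'}e_f:A_2$ is derivable. *)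

theory Defs
  imports Main "HOL.Rat"
begin

type_synonym var = string
type_synonym fid = string

datatype val = VUnit | VBool bool | VInt int | VList "val list" | VPair val val

datatype bty = TUnit | TBool | TInt | TList bty | TProd bty bty

fun vtype :: "val \<Rightarrow> bty \<Rightarrow> bool" where
  "vtype VUnit TUnit = True"
| "vtype (VBool b) TBool = True"
| "vtype (VInt n) TInt = True"
| "vtype (VList vs) (TList T) = (\<forall>w\<in>set vs. vtype w T)"
| "vtype (VPair v1 v2) (TProd T1 T2) = (vtype v1 T1 \<and> vtype v2 T2)"
| "vtype _ _ = False"

datatype binop = OAdd | OSub | OMul | ODiv | OMod | OEq | ONeq | OLt | OGt | OAnd | OOr

datatype expr =
    EUnit | ETrue | EFalse | EInt int | EVar var
  | EOp binop var var
  | EApp fid var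
  | EIf var expr expr
  | ELet var expr expr          (* let(x, e1, x.e2) *)
  | EPair var var
  | EMatchP var var var expr    (* match(x, (x1,x2).e) *)
  | ENil
  | ECons var var
  | EMatchL var expr var var expr  (* match(x, e1, (xh,xt).e2) *)
  | EShare var var var expr     (* share(x, (x1,x2).e) *)

fun eval_op :: "binop \<Rightarrow> val \<Rightarrow> val \<Rightarrow> val option" where
  "eval_op OAdd (VInt a) (VInt b) = Some (VInt (a + b))"
| "eval_op OSub (VInt a) (VInt b) = Some (VInt (a - b))"
| "eval_op OMul (VInt a) (VInt b) = Some (VInt (a * b))"
| "eval_op ODiv (VInt a) (VInt b) = (if b = 0 then None else Some (VInt (a div b)))"
| "eval_op OMod (VInt a) (VInt b) = (if b = 0 then None else Some (VInt (a mod b)))"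
| "eval_op OEq (VInt a) (VInt b) = Some (VBool (a = b))"
| "eval_op ONeq (VInt a) (VInt b) = Some (VBool (a \<noteq> b))"
| "eval_op OLt (VInt a) (VInt b) = Some (VBool (a < b))"
| "eval_op OGt (VInt a) (VInt b) = Some (VBool (a > b))"
| "eval_op OAnd (VBool a) (VBool b) = Some (VBool (a \<and> b))"
| "eval_op OOr (VBool a) (VBool b) = Some (VBool (a \<or> b))"
| "eval_op _ _ _ = None"

datatype cc = KUnit | KBool | KInt | KNil | KVar | KOp | KApp | KLet | KCond | KPair
  | KMatchP | KCons | KMatchN | KMatchL

type_synonym costs = "cc \<Rightarrow> rat"
type_synonym env = "var \<rightharpoonup> val"
text \<open>A program maps each function identifier f to (parameter variable y^f, body e_f).\<close>
type_synonym prog = "fid \<Rightarrow> var \<times> expr"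

section \<open>Cost semantics  E |-^q_q' e \<Down> v\<close>

inductive eval :: "costs \<Rightarrow> prog \<Rightarrow> env \<Rightarrow> rat \<Rightarrow> rat \<Rightarrow> expr \<Rightarrow> val \<Rightarrow> bool" where
  E_Unit: "\<lbrakk>0 \<le> q; 0 \<le> q + K KUnit\<rbrakk> \<Longrightarrow> eval K P E (q + K KUnit) q EUnit VUnit"
| E_True: "\<lbrakk>0 \<le> q; 0 \<le> q + K KBool\<rbrakk> \<Longrightarrow> eval K P E (q + K KBool) q ETrue (VBool True)"
| E_False: "\<lbrakk>0 \<le> q; 0 \<le> q + K KBool\<rbrakk> \<Longrightarrow> eval K P E (q + K KBool) q EFalse (VBool False)"
| E_Int: "\<lbrakk>0 \<le> q; 0 \<le> q + K KInt\<rbrakk> \<Longrightarrow> eval K P E (q + K KInt) q (EInt n) (VInt n)"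
| E_Nil: "\<lbrakk>0 \<le> q; 0 \<le> q + K KNil\<rbrakk> \<Longrightarrow> eval K P E (q + K KNil) q ENil (VList [])"
| E_Var: "\<lbrakk>E x = Some v; 0 \<le> q; 0 \<le> q + K KVar\<rbrakk> \<Longrightarrow> eval K P E (q + K KVar) q (EVar x) v"
| E_Op: "\<lbrakk>E x1 = Some v1; E x2 = Some v2; eval_op d v1 v2 = Some v; 0 \<le> q; 0 \<le> q + K KOp\<rbrakk>
         \<Longrightarrow> eval K P E (q + K KOp) q (EOp d x1 x2) v"
| E_Pair: "\<lbrakk>E x1 = Some v1; E x2 = Some v2; 0 \<le> q; 0 \<le> q + K KPair\<rbrakk>
         \<Longrightarrow> eval K P E (q + K KPair) q (EPair x1 x2) (VPair v1 v2)"
| E_Cons: "\<lbrakk>E xh = Some v1; E xt = Some (VList vs); 0 \<le> q; 0 \<le> q + K KCons\<rbrakk>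
         \<Longrightarrow> eval K P E (q + K KCons) q (ECons xh xt) (VList (v1 # vs))"
| E_App: "\<lbrakk>P f = (y, ef); E x = Some u; eval K P (E(y \<mapsto> u)) q q' ef v; 0 \<le> q + K KApp\<rbrakk>
         \<Longrightarrow> eval K P E (q + K KApp) q' (EApp f x) v"
| E_Let: "\<lbrakk>eval K P E (q - K KLet) q1 e1 v1; eval K P (E(x \<mapsto> v1)) q1 q' e2 v; 0 \<le> q\<rbrakk>
         \<Longrightarrow> eval K P E q q' (ELet x e1 e2) v"
| E_IfT: "\<lbrakk>E x = Some (VBool True); eval K P E (q - K KCond) q' et v; 0 \<le> q\<rbrakk>
         \<Longrightarrow> eval K P E q q' (EIf x et ef) v"
| E_IfF: "\<lbrakk>E x = Some (VBool False); eval K P E (q - K KCond) q' ef v; 0 \<le> q\<rbrakk>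
         \<Longrightarrow> eval K P E q q' (EIf x et ef) v"
| E_MatchP: "\<lbrakk>E x = Some (VPair v1 v2); eval K P (E(x1 \<mapsto> v1, x2 \<mapsto> v2)) (q - K KMatchP) q' e v; 0 \<le> q\<rbrakk>
         \<Longrightarrow> eval K P E q q' (EMatchP x x1 x2 e) v"
| E_MatchN: "\<lbrakk>E x = Some (VList []); eval K P E (q - K KMatchN) q' e1 v; 0 \<le> q\<rbrakk>
         \<Longrightarrow> eval K P E q q' (EMatchL x e1 xh xt e2) v"
| E_MatchC: "\<lbrakk>E x = Some (VList (v1 # vs)); eval K P (E(xh \<mapsto> v1, xt \<mapsto> VList vs)) (q - K KMatchL) q' e2 v; 0 \<le> q\<rbrakk>
         \<Longrightarrow> eval K P E q q' (EMatchL x e1 xh xt e2) v"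
| E_Share: "\<lbrakk>E x = Some v1; eval K P ((E(x := None))(x1 \<mapsto> v1, x2 \<mapsto> v1)) q q' e v\<rbrakk>
         \<Longrightarrow> eval K P E q q' (EShare x x1 x2 e) v"

section \<open>Annotated types, potential, sharing, subtyping\<close>

datatype aty = AUnit | ABool | AInt | AList rat aty | AProd aty aty

fun erase :: "aty \<Rightarrow> bty" where
  "erase AUnit = TUnit" | "erase ABool = TBool" | "erase AInt = TInt"
| "erase (AList p A) = TList (erase A)"
| "erase (AProd A B) = TProd (erase A) (erase B)"

fun nonneg :: "aty \<Rightarrow> bool" where
  "nonneg (AList p A) = (0 \<le> p \<and> nonneg A)"
| "nonneg (AProd A B) = (nonneg A \<and> nonneg B)"
| "nonneg _ = True"

fun phi :: "val \<Rightarrow> aty \<Rightarrow> rat" where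
  "phi (VPair v1 v2) (AProd A1 A2) = phi v1 A1 + phi v2 A2"
| "phi (VList vs) (AList p A) = of_nat (length vs) * p + sum_list (map (\<lambda>w. phi w A) vs)"
| "phi _ _ = 0"

type_synonym ctx = "var \<rightharpoonup> aty"

definition models :: "env \<Rightarrow> ctx \<Rightarrow> bool" where
  "models E \<Gamma> \<longleftrightarrow> (\<forall>x \<in> dom \<Gamma>. \<exists>v. E x = Some v \<and> vtype v (erase (the (\<Gamma> x))))"

definition Phi_env :: "env \<Rightarrow> ctx \<Rightarrow> rat" where
  "Phi_env E \<Gamma> = (\<Sum>x \<in> dom \<Gamma>. phi (the (E x)) (the (\<Gamma> x)))"

inductive share_rel :: "aty \<Rightarrow> aty \<Rightarrow> aty \<Rightarrow> bool" where
  "share_rel AUnit AUnit AUnit"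
| "share_rel ABool ABool ABool"
| "share_rel AInt AInt AInt"
| "\<lbrakk>share_rel A A1 A2; share_rel B B1 B2\<rbrakk> \<Longrightarrow> share_rel (AProd A B) (AProd A1 B1) (AProd A2 B2)"
| "\<lbrakk>share_rel A A1 A2; p = p1 + p2\<rbrakk> \<Longrightarrow> share_rel (AList p A) (AList p1 A1) (AList p2 A2)"

inductive subty :: "aty \<Rightarrow> aty \<Rightarrow> bool" where
  "subty AUnit AUnit"
| "subty ABool ABool"
| "subty AInt AInt"
| "\<lbrakk>subty A1 A2; p1 \<le> p2\<rbrakk> \<Longrightarrow> subty (AList p1 A1) (AList p2 A2)"
| "\<lbrakk>subty A1 A2; subty B1 B2\<rbrakk> \<Longrightarrow> subty (AProd A1 B1) (AProd A2 B2)"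

section \<open>Signatures and the upper-bound type system\<close>

text \<open>An annotated function type A1 -q/q'-> A2 is represented as (A1, q, q', A2).\<close>
type_synonym sig = "fid \<Rightarrow> (aty \<times> rat \<times> rat \<times> aty) set"

definition wf_sig :: "sig \<Rightarrow> bool" where
  "wf_sig \<Sigma> \<longleftrightarrow> (\<forall>f. \<Sigma> f \<noteq> {} \<and>
      (\<forall>(A1, q, q', A2) \<in> \<Sigma> f. nonneg A1 \<and> nonneg A2 \<and> 0 \<le> q \<and> 0 \<le> q'))"

definition ann_ok :: "ctx \<Rightarrow> rat \<Rightarrow> rat \<Rightarrow> aty \<Rightarrow> bool" where
  "ann_ok \<Gamma> q q' A \<longleftrightarrow> (\<forall>x \<in> dom \<Gamma>. nonneg (the (\<Gamma> x))) \<and> 0 \<le> q \<and> 0 \<le> q' \<and> nonneg A"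

inductive typed :: "costs \<Rightarrow> sig \<Rightarrow> ctx \<Rightarrow> rat \<Rightarrow> rat \<Rightarrow> expr \<Rightarrow> aty \<Rightarrow> bool" where
  T_Unit: "ann_ok Map.empty (K KUnit) 0 AUnit \<Longrightarrow> typed K \<Sigma> Map.empty (K KUnit) 0 EUnit AUnit"
| T_True: "ann_ok Map.empty (K KBool) 0 ABool \<Longrightarrow> typed K \<Sigma> Map.empty (K KBool) 0 ETrue ABool"
| T_False: "ann_ok Map.empty (K KBool) 0 ABool \<Longrightarrow> typed K \<Sigma> Map.empty (K KBool) 0 EFalse ABool"
| T_Int: "ann_ok Map.empty (K KInt) 0 AInt \<Longrightarrow> typed K \<Sigma> Map.empty (K KInt) 0 (EInt n) AInt"
| T_Nil: "ann_ok Map.empty (K KNil) 0 (AList p A) \<Longrightarrow> typed K \<Sigma> Map.empty (K KNil) 0 ENil (AList p A)"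
| T_Var: "ann_ok [x \<mapsto> A] (K KVar) 0 A \<Longrightarrow> typed K \<Sigma> [x \<mapsto> A] (K KVar) 0 (EVar x) A"
| T_OpB: "\<lbrakk>d \<in> {OAnd, OOr}; x1 \<noteq> x2; ann_ok [x1 \<mapsto> ABool, x2 \<mapsto> ABool] (K KOp) 0 ABool\<rbrakk>
         \<Longrightarrow> typed K \<Sigma> [x1 \<mapsto> ABool, x2 \<mapsto> ABool] (K KOp) 0 (EOp d x1 x2) ABool"
| T_OpCmp: "\<lbrakk>d \<in> {OEq, ONeq, OLt, OGt}; x1 \<noteq> x2; ann_ok [x1 \<mapsto> AInt, x2 \<mapsto> AInt] (K KOp) 0 ABool\<rbrakk>
         \<Longrightarrow> typed K \<Sigma> [x1 \<mapsto> AInt, x2 \<mapsto> AInt] (K KOp) 0 (EOp d x1 x2) ABool"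
| T_OpArith: "\<lbrakk>d \<in> {OAdd, OSub, OMul, ODiv, OMod}; x1 \<noteq> x2; ann_ok [x1 \<mapsto> AInt, x2 \<mapsto> AInt] (K KOp) 0 AInt\<rbrakk>
         \<Longrightarrow> typed K \<Sigma> [x1 \<mapsto> AInt, x2 \<mapsto> AInt] (K KOp) 0 (EOp d x1 x2) AInt"
| T_App: "\<lbrakk>(A1, q, q', A2) \<in> \<Sigma> f; 0 \<le> q; ann_ok [x \<mapsto> A1] (q + K KApp) q' A2\<rbrakk>
         \<Longrightarrow> typed K \<Sigma> [x \<mapsto> A1] (q + K KApp) q' (EApp f x) A2"
| T_Let: "\<lbrakk>typed K \<Sigma> \<Gamma>1 (q - K KLet) q1 e1 A1; typed K \<Sigma> (\<Gamma>2(x \<mapsto> A1)) q1 q' e2 A2;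
           dom \<Gamma>1 \<inter> dom \<Gamma>2 = {}; x \<notin> dom \<Gamma>2; ann_ok (\<Gamma>1 ++ \<Gamma>2) q q' A2\<rbrakk>
         \<Longrightarrow> typed K \<Sigma> (\<Gamma>1 ++ \<Gamma>2) q q' (ELet x e1 e2) A2"
| T_If: "\<lbrakk>typed K \<Sigma> \<Gamma> (q - K KCond) q' et A; typed K \<Sigma> \<Gamma> (q - K KCond) q' ef A;
          x \<notin> dom \<Gamma>; ann_ok (\<Gamma>(x \<mapsto> ABool)) q q' A\<rbrakk>
         \<Longrightarrow> typed K \<Sigma> (\<Gamma>(x \<mapsto> ABool)) q q' (EIf x et ef) A"
| T_Pair: "\<lbrakk>x1 \<noteq> x2; ann_ok [x1 \<mapsto> A1, x2 \<mapsto> A2] (K KPair) 0 (AProd A1 A2)\<rbrakk>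
         \<Longrightarrow> typed K \<Sigma> [x1 \<mapsto> A1, x2 \<mapsto> A2] (K KPair) 0 (EPair x1 x2) (AProd A1 A2)"
| T_MatchP: "\<lbrakk>typed K \<Sigma> (\<Gamma>(x1 \<mapsto> A1, x2 \<mapsto> A2)) (q - K KMatchP) q' e A;
            x1 \<noteq> x2; x1 \<notin> dom \<Gamma>; x2 \<notin> dom \<Gamma>; x \<notin> dom \<Gamma>;
            ann_ok (\<Gamma>(x \<mapsto> AProd A1 A2)) q q' A\<rbrakk>
         \<Longrightarrow> typed K \<Sigma> (\<Gamma>(x \<mapsto> AProd A1 A2)) q q' (EMatchP x x1 x2 e) A"
| T_Cons: "\<lbrakk>xh \<noteq> xt; ann_ok [xh \<mapsto> A, xt \<mapsto> AList p A] (p + K KCons) 0 (AList p A)\<rbrakk>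
         \<Longrightarrow> typed K \<Sigma> [xh \<mapsto> A, xt \<mapsto> AList p A] (p + K KCons) 0 (ECons xh xt) (AList p A)"
| T_MatchL: "\<lbrakk>typed K \<Sigma> \<Gamma> (q - K KMatchN) q' e1 B;
            typed K \<Sigma> (\<Gamma>(xh \<mapsto> A, xt \<mapsto> AList p A)) (q + p - K KMatchL) q' e2 B;
            xh \<noteq> xt; xh \<notin> dom \<Gamma>; xt \<notin> dom \<Gamma>; x \<notin> dom \<Gamma>;
            ann_ok (\<Gamma>(x \<mapsto> AList p A)) q q' B\<rbrakk>
         \<Longrightarrow> typed K \<Sigma> (\<Gamma>(x \<mapsto> AList p A)) q q' (EMatchL x e1 xh xt e2) B"
| T_Share: "\<lbrakk>typed K \<Sigma> (\<Gamma>(x1 \<mapsto> A1, x2 \<mapsto> A2)) q q' e B; share_rel A A1 A2;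
            x1 \<noteq> x2; x1 \<notin> dom \<Gamma>; x2 \<notin> dom \<Gamma>; x \<notin> dom \<Gamma>;
            ann_ok (\<Gamma>(x \<mapsto> A)) q q' B\<rbrakk>
         \<Longrightarrow> typed K \<Sigma> (\<Gamma>(x \<mapsto> A)) q q' (EShare x x1 x2 e) B"
| T_Relax: "\<lbrakk>typed K \<Sigma> \<Gamma> p p' e A; q \<ge> p; q - p \<ge> q' - p'; ann_ok \<Gamma> q q' A\<rbrakk>
         \<Longrightarrow> typed K \<Sigma> \<Gamma> q q' e A"
| T_Weak: "\<lbrakk>typed K \<Sigma> \<Gamma> q q' e B; x \<notin> dom \<Gamma>; ann_ok (\<Gamma>(x \<mapsto> A)) q q' B\<rbrakk>
         \<Longrightarrow> typed K \<Sigma> (\<Gamma>(x \<mapsto> A)) q q' e B"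
| T_Sub: "\<lbrakk>typed K \<Sigma> \<Gamma> q q' e A; subty B A; ann_ok \<Gamma> q q' B\<rbrakk>
         \<Longrightarrow> typed K \<Sigma> \<Gamma> q q' e B"
| T_Super: "\<lbrakk>typed K \<Sigma> (\<Gamma>(x \<mapsto> B)) q q' e C; subty B A; x \<notin> dom \<Gamma>; ann_ok (\<Gamma>(x \<mapsto> A)) q q' C\<rbrakk>
         \<Longrightarrow> typed K \<Sigma> (\<Gamma>(x \<mapsto> A)) q q' e C"

text \<open>Well-typedness of a program w.r.t. a signature (y^f = fst (P f), e_f = snd (P f)).\<close>
definition prog_typed :: "costs \<Rightarrow> sig \<Rightarrow> prog \<Rightarrow> bool" where
  "prog_typed K \<Sigma> P \<longleftrightarrow>
     (\<forall>f. \<forall>(A1, q, q', A2) \<in> \<Sigma> f. typed K \<Sigma> [fst (P f) \<mapsto> A1] q q' (snd (P f)) A2)"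

end

theory Submission imports Defs begin

text \<open>The theorem is proved for a logical relation that also records type preservation, by
  induction on the evaluation with an inner induction on the typing derivation: the structural rules
  do not decompose the expression, and the typing of a function body is not part of the typing of a
  call. Relaxation, weakening and subtyping preserve the relation because potential is nonnegative
  and monotone in the annotations. Each syntax-directed rule is paid for exactly: its constant covers
  the cost charged by the evaluation rule, potential moves with the values bound to variables,
  sharing splits it additively, and matching a cons cell releases the cell's annotation.\<close>

section \<open>Potential of values and contexts\<close>

lemma phi_nonneg: "nonneg A \<Longrightarrow> 0 \<le> phi v A"
proof (induction v arbitrary: A)
  case (VList vs)
  then show ?case by (cases A) (auto intro!: add_nonneg_nonneg sum_list_nonneg)
next
  case (VPair v1 v2)
  then show ?case by (cases A) auto
qed auto

lemma phi_base_type [simp]: "phi v AUnit = 0" "phi v ABool = 0" "phi v AInt = 0"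
  by (cases v; simp)+

lemma subty_erase: "subty B A \<Longrightarrow> erase B = erase A"
  by (induction rule: subty.induct) auto

lemma subty_phi_le: "subty B A \<Longrightarrow> phi v B \<le> phi v A"
proof (induction arbitrary: v rule: subty.induct)
  case (4 A1 A2 p1 p2)
  then show ?case by (cases v) (auto intro!: add_mono mult_left_mono sum_list_mono)
next
  case (5 A1 A2 B1 B2)
  then show ?case by (cases v) (auto intro: add_mono)
qed auto

lemma share_rel_erase: "share_rel A A1 A2 \<Longrightarrow> erase A1 = erase A \<and> erase A2 = erase A"
  by (induction rule: share_rel.induct) auto

lemma share_rel_phi: "share_rel A A1 A2 \<Longrightarrow> phi v A = phi v A1 + phi v A2"
proof (induction arbitrary: v rule: share_rel.induct)
  case (4 A A1 A2 B B1 B2)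
  then show ?case by (cases v) auto
next
  case (5 A A1 A2 p p1 p2)
  then show ?case by (cases v) (simp_all add: sum_list_addf algebra_simps)
qed auto

lemma typed_ann_ok: "typed K \<Sigma> \<Gamma> q q' e A \<Longrightarrow> ann_ok \<Gamma> q q' A"
  by (induction rule: typed.induct)

lemma Phi_env_nonneg: "\<forall>x\<in>dom \<Gamma>. nonneg (the (\<Gamma> x)) \<Longrightarrow> 0 \<le> Phi_env E \<Gamma>"
  unfolding Phi_env_def by (intro sum_nonneg) (auto intro: phi_nonneg)

lemma ann_ok_nonneg_type: "ann_ok \<Gamma> q q' A \<Longrightarrow> nonneg A"
  unfolding ann_ok_def by simp

lemma ann_ok_Phi_env_nonneg: "ann_ok \<Gamma> q q' A \<Longrightarrow> 0 \<le> Phi_env E \<Gamma>"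
  unfolding ann_ok_def by (auto intro: Phi_env_nonneg)

lemma Phi_env_fresh_upd: "x \<notin> dom \<Gamma> \<Longrightarrow> Phi_env (E(x := w)) \<Gamma> = Phi_env E \<Gamma>"
  unfolding Phi_env_def by (intro sum.cong) auto

lemma Phi_env_upd:
  "x \<notin> dom \<Gamma> \<Longrightarrow> finite (dom \<Gamma>) \<Longrightarrow> Phi_env E (\<Gamma>(x \<mapsto> A)) = Phi_env E \<Gamma> + phi (the (E x)) A"
  unfolding Phi_env_def by (auto intro!: sum.cong)

lemma Phi_env_empty [simp]: "Phi_env E Map.empty = 0"
  by (simp add: Phi_env_def)

lemma Phi_env_singleton [simp]: "Phi_env E [x \<mapsto> A] = phi (the (E x)) A"
  using Phi_env_upd[of x Map.empty] by simp

lemma Phi_env_two: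
  "x1 \<noteq> x2 \<Longrightarrow> Phi_env E [x1 \<mapsto> A1, x2 \<mapsto> A2] = phi (the (E x1)) A1 + phi (the (E x2)) A2"
  by (subst Phi_env_upd) auto

lemma Phi_env_bind:
  "x \<notin> dom \<Gamma> \<Longrightarrow> finite (dom \<Gamma>) \<Longrightarrow> Phi_env (E(x \<mapsto> w)) (\<Gamma>(x \<mapsto> A)) = Phi_env E \<Gamma> + phi w A"
  by (simp add: Phi_env_upd Phi_env_fresh_upd)

text \<open>No finiteness hypothesis is needed: for an infinite domain both sides below are empty sums.\<close>

lemma Phi_env_upd_mono:
  assumes "x \<notin> dom \<Gamma>" "phi (the (E x)) B \<le> phi (the (E x)) A"
  shows "Phi_env E (\<Gamma>(x \<mapsto> B)) \<le> Phi_env E (\<Gamma>(x \<mapsto> A))"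
  using assms by (cases "finite (dom \<Gamma>)") (simp_all add: Phi_env_upd, simp add: Phi_env_def)

lemma Phi_env_le_upd:
  assumes "x \<notin> dom \<Gamma>" "0 \<le> phi (the (E x)) A"
  shows "Phi_env E \<Gamma> \<le> Phi_env E (\<Gamma>(x \<mapsto> A))"
  using assms by (cases "finite (dom \<Gamma>)") (simp_all add: Phi_env_upd, simp add: Phi_env_def)

lemma Phi_env_map_add:
  assumes "dom \<Gamma>1 \<inter> dom \<Gamma>2 = {}" "finite (dom \<Gamma>1)" "finite (dom \<Gamma>2)"
  shows "Phi_env E (\<Gamma>1 ++ \<Gamma>2) = Phi_env E \<Gamma>1 + Phi_env E \<Gamma>2"
proof -
  have "Phi_env E (\<Gamma>1 ++ \<Gamma>2) = (\<Sum>x\<in>dom \<Gamma>1 \<union> dom \<Gamma>2. phi (the (E x)) (the ((\<Gamma>1 ++ \<Gamma>2) x)))"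
    by (simp add: Phi_env_def Un_commute)
  also have "\<dots> = Phi_env E \<Gamma>1 + Phi_env E \<Gamma>2"
    using assms unfolding Phi_env_def
    by (simp add: sum.union_disjoint)
       (intro arg_cong2[where f = "(+)"] sum.cong; auto simp: map_add_def split: option.splits)
  finally show ?thesis .
qed

section \<open>Well-typed environments\<close>

lemma models_finite_dom: "models E \<Gamma> \<Longrightarrow> finite (dom E) \<Longrightarrow> finite (dom \<Gamma>)"
  unfolding models_def by (metis domI finite_subset subsetI)

lemma models_fresh_upd: "x \<notin> dom \<Gamma> \<Longrightarrow> models (E(x := w)) \<Gamma> \<longleftrightarrow> models E \<Gamma>"
  unfolding models_def by auto

lemma models_upd:
  "x \<notin> dom \<Gamma> \<Longrightarrow> models E (\<Gamma>(x \<mapsto> A)) \<longleftrightarrow> models E \<Gamma> \<and> (\<exists>w. E x = Some w \<and> vtype w (erase A))"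
  unfolding models_def by auto

lemma models_singleton [simp]: "models E [x \<mapsto> A] \<longleftrightarrow> (\<exists>w. E x = Some w \<and> vtype w (erase A))"
  unfolding models_def by simp

lemma models_two:
  "x1 \<noteq> x2 \<Longrightarrow> models E [x1 \<mapsto> A1, x2 \<mapsto> A2] \<longleftrightarrow>
    (\<exists>w. E x1 = Some w \<and> vtype w (erase A1)) \<and> (\<exists>w. E x2 = Some w \<and> vtype w (erase A2))"
  by (subst models_upd) (auto simp: models_def)

lemma models_bind:
  "x \<notin> dom \<Gamma> \<Longrightarrow> models (E(x \<mapsto> w)) (\<Gamma>(x \<mapsto> A)) \<longleftrightarrow> models E \<Gamma> \<and> vtype w (erase A)"
  unfolding models_def by auto

lemma models_map_add:
  assumes "dom \<Gamma>1 \<inter> dom \<Gamma>2 = {}"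
  shows "models E (\<Gamma>1 ++ \<Gamma>2) \<longleftrightarrow> models E \<Gamma>1 \<and> models E \<Gamma>2"
proof -
  have left: "(\<Gamma>1 ++ \<Gamma>2) x = \<Gamma>1 x" if "x \<in> dom \<Gamma>1" for x
  proof -
    have "x \<notin> dom \<Gamma>2" using assms that by blast
    then show ?thesis by (rule map_add_dom_app_simps(3))
  qed
  have "(\<forall>x\<in>dom \<Gamma>1. \<exists>v. E x = Some v \<and> vtype v (erase (the ((\<Gamma>1 ++ \<Gamma>2) x)))) \<longleftrightarrow> models E \<Gamma>1"
    unfolding models_def by (intro ball_cong) (simp_all add: left)
  moreover have "(\<forall>x\<in>dom \<Gamma>2. \<exists>v. E x = Some v \<and> vtype v (erase (the ((\<Gamma>1 ++ \<Gamma>2) x)))) \<longleftrightarrow> models E \<Gamma>2"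
    unfolding models_def by (intro ball_cong) (simp_all add: map_add_dom_app_simps(1))
  ultimately show ?thesis
    unfolding models_def[of E "\<Gamma>1 ++ \<Gamma>2"] dom_map_add ball_Un by blast
qed

lemma models_bind2:
  assumes "x1 \<noteq> x2" "x1 \<notin> dom \<Gamma>" "x2 \<notin> dom \<Gamma>"
  shows "models (E(x1 \<mapsto> w1, x2 \<mapsto> w2)) (\<Gamma>(x1 \<mapsto> A1, x2 \<mapsto> A2)) \<longleftrightarrow>
    models E \<Gamma> \<and> vtype w1 (erase A1) \<and> vtype w2 (erase A2)"
proof -
  have "x2 \<notin> dom (\<Gamma>(x1 \<mapsto> A1))" using assms by auto
  then show ?thesis using assms(2) by (simp add: models_bind)
qed

lemma Phi_env_bind2:
  assumes "x1 \<noteq> x2" "x1 \<notin> dom \<Gamma>" "x2 \<notin> dom \<Gamma>" "finite (dom \<Gamma>)"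
  shows "Phi_env (E(x1 \<mapsto> w1, x2 \<mapsto> w2)) (\<Gamma>(x1 \<mapsto> A1, x2 \<mapsto> A2)) = Phi_env E \<Gamma> + phi w1 A1 + phi w2 A2"
proof -
  have "x2 \<notin> dom (\<Gamma>(x1 \<mapsto> A1))" using assms by auto
  then show ?thesis using assms(2,4) by (simp add: Phi_env_bind)
qed

section \<open>The soundness relation\<close>

text \<open>The conclusion of the soundness theorem for one judgement, strengthened by type preservation,
  which the induction needs to re-establish the typing of the environment after a binding.\<close>

definition sound_judgement ::
    "costs \<Rightarrow> prog \<Rightarrow> env \<Rightarrow> expr \<Rightarrow> val \<Rightarrow> ctx \<Rightarrow> rat \<Rightarrow> rat \<Rightarrow> aty \<Rightarrow> bool" where
  "sound_judgement K P E e v \<Gamma> q q' A \<longleftrightarrow> (models E \<Gamma> \<longrightarrow> vtype v (erase A) \<and>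
     (\<forall>p r. 0 \<le> p \<longrightarrow> 0 \<le> r \<longrightarrow> q + Phi_env E \<Gamma> + r \<le> p \<longrightarrow>
        (\<exists>p'. 0 \<le> p' \<and> eval K P E p p' e v \<and> q' + phi v A + r \<le> p')))"

lemma sound_judgementI:
  assumes "models E \<Gamma> \<Longrightarrow> vtype v (erase A)"
    and "\<And>p r. models E \<Gamma> \<Longrightarrow> 0 \<le> p \<Longrightarrow> 0 \<le> r \<Longrightarrow> q + Phi_env E \<Gamma> + r \<le> p \<Longrightarrow>
          \<exists>p'. 0 \<le> p' \<and> eval K P E p p' e v \<and> q' + phi v A + r \<le> p'"
  shows "sound_judgement K P E e v \<Gamma> q q' A"
  using assms unfolding sound_judgement_def by blast

lemma sound_judgementD:
  assumes "sound_judgement K P E e v \<Gamma> q q' A" "models E \<Gamma>"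
  shows "vtype v (erase A)"
    and "\<And>p r. 0 \<le> p \<Longrightarrow> 0 \<le> r \<Longrightarrow> q + Phi_env E \<Gamma> + r \<le> p \<Longrightarrow>
          \<exists>p'. 0 \<le> p' \<and> eval K P E p p' e v \<and> q' + phi v A + r \<le> p'"
  using assms unfolding sound_judgement_def by blast+

lemma sound_judgement_relax:
  assumes sound: "sound_judgement K P E e v \<Gamma> p0 p0' A" and "p0 \<le> q" "q' - p0' \<le> q - p0"
  shows "sound_judgement K P E e v \<Gamma> q q' A"
proof (rule sound_judgementI)
  assume m: "models E \<Gamma>"
  show "vtype v (erase A)" using sound_judgementD(1)[OF sound m] .
  fix p r :: rat assume "0 \<le> p" "0 \<le> r" "q + Phi_env E \<Gamma> + r \<le> p"
  then show "\<exists>p'. 0 \<le> p' \<and> eval K P E p p' e v \<and> q' + phi v A + r \<le> p'"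
    using sound_judgementD(2)[OF sound m, of p "r + (q - p0)"] assms by fastforce
qed

lemma sound_judgement_subtype:
  assumes sound: "sound_judgement K P E e v \<Gamma> q q' A" and "subty B A"
  shows "sound_judgement K P E e v \<Gamma> q q' B"
proof (rule sound_judgementI)
  assume m: "models E \<Gamma>"
  show "vtype v (erase B)"
    using sound_judgementD(1)[OF sound m] subty_erase[OF \<open>subty B A\<close>] by simp
  fix p r :: rat assume "0 \<le> p" "0 \<le> r" "q + Phi_env E \<Gamma> + r \<le> p"
  then show "\<exists>p'. 0 \<le> p' \<and> eval K P E p p' e v \<and> q' + phi v B + r \<le> p'"
    using sound_judgementD(2)[OF sound m] subty_phi_le[OF \<open>subty B A\<close>, of v] by fastforce
qed

lemma sound_judgement_context_mono:
  assumes sound: "sound_judgement K P E e v \<Gamma> q q' A"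
    and ctx: "models E \<Gamma>' \<Longrightarrow> models E \<Gamma> \<and> Phi_env E \<Gamma> \<le> Phi_env E \<Gamma>'"
  shows "sound_judgement K P E e v \<Gamma>' q q' A"
proof (rule sound_judgementI)
  assume "models E \<Gamma>'"
  then have m: "models E \<Gamma>" and pot: "Phi_env E \<Gamma> \<le> Phi_env E \<Gamma>'"
    using ctx by auto
  show "vtype v (erase A)" using sound_judgementD(1)[OF sound m] .
  fix p r :: rat assume "0 \<le> p" "0 \<le> r" "q + Phi_env E \<Gamma>' + r \<le> p"
  then show "\<exists>p'. 0 \<le> p' \<and> eval K P E p p' e v \<and> q' + phi v A + r \<le> p'"
    using sound_judgementD(2)[OF sound m] pot by simp
qed

lemma sound_judgement_weaken:
  assumes sound: "sound_judgement K P E e v \<Gamma> q q' B" and x: "x \<notin> dom \<Gamma>"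
    and ann: "ann_ok (\<Gamma>(x \<mapsto> A)) q q' B"
  shows "sound_judgement K P E e v (\<Gamma>(x \<mapsto> A)) q q' B"
proof (rule sound_judgement_context_mono[OF sound])
  have "nonneg A" using ann unfolding ann_ok_def by auto
  then show "models E (\<Gamma>(x \<mapsto> A)) \<Longrightarrow> models E \<Gamma> \<and> Phi_env E \<Gamma> \<le> Phi_env E (\<Gamma>(x \<mapsto> A))"
    using Phi_env_le_upd[OF x] phi_nonneg models_upd[OF x] by blast
qed

lemma sound_judgement_supertype:
  assumes sound: "sound_judgement K P E e v (\<Gamma>(x \<mapsto> B)) q q' C" and "subty B A" and x: "x \<notin> dom \<Gamma>"
  shows "sound_judgement K P E e v (\<Gamma>(x \<mapsto> A)) q q' C"
proof (rule sound_judgement_context_mono[OF sound])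
  show "models E (\<Gamma>(x \<mapsto> A)) \<Longrightarrow>
      models E (\<Gamma>(x \<mapsto> B)) \<and> Phi_env E (\<Gamma>(x \<mapsto> B)) \<le> Phi_env E (\<Gamma>(x \<mapsto> A))"
    using Phi_env_upd_mono[OF x] subty_phi_le[OF \<open>subty B A\<close>] models_upd[OF x]
      subty_erase[OF \<open>subty B A\<close>] by simp
qed

lemmas sound_judgement_structural =
  sound_judgement_relax sound_judgement_subtype sound_judgement_weaken sound_judgement_supertype

lemma sound_judgement_axiom:
  assumes ev: "\<And>p. 0 \<le> p \<Longrightarrow> 0 \<le> p + c \<Longrightarrow> eval K P E (p + c) p e w"
    and out: "models E \<Gamma> \<Longrightarrow> vtype w (erase T) \<and> 0 \<le> phi w T \<and> c + phi w T \<le> q + Phi_env E \<Gamma>"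
  shows "sound_judgement K P E e w \<Gamma> q 0 T"
proof (rule sound_judgementI)
  assume m: "models E \<Gamma>"
  then show "vtype w (erase T)" using out by blast
  fix p r :: rat assume "0 \<le> p" "0 \<le> r" "q + Phi_env E \<Gamma> + r \<le> p"
  then have "0 \<le> p - c" "0 + phi w T + r \<le> p - c" using out[OF m] by auto
  moreover have "eval K P E p (p - c) e w" using ev[of "p - c"] \<open>0 \<le> p - c\<close> \<open>0 \<le> p\<close> by simp
  ultimately show "\<exists>p'. 0 \<le> p' \<and> eval K P E p p' e w \<and> 0 + phi w T + r \<le> p'" by blast
qed

lemma sound_judgement_step:
  assumes sound: "sound_judgement K P E' e' v \<Gamma>' q1 q' A" and ann: "ann_ok \<Gamma>' q1 q' A"
    and ctx: "models E \<Gamma> \<Longrightarrow> models E' \<Gamma>' \<and> q1 + Phi_env E' \<Gamma>' \<le> q - c + Phi_env E \<Gamma>"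
    and step: "\<And>p p'. eval K P E' (p - c) p' e' v \<Longrightarrow> 0 \<le> p \<Longrightarrow> eval K P E p p' e v"
  shows "sound_judgement K P E e v \<Gamma> q q' A"
proof (rule sound_judgementI)
  assume m: "models E \<Gamma>"
  then have m': "models E' \<Gamma>'" and pot: "q1 + Phi_env E' \<Gamma>' \<le> q - c + Phi_env E \<Gamma>"
    using ctx by auto
  show "vtype v (erase A)" using sound_judgementD(1)[OF sound m'] .
  fix p r :: rat assume h: "0 \<le> p" "0 \<le> r" "q + Phi_env E \<Gamma> + r \<le> p"
  have "0 \<le> Phi_env E' \<Gamma>'" "0 \<le> q1"
    using ann unfolding ann_ok_def by (auto intro: Phi_env_nonneg)
  then obtain p' where "0 \<le> p'" "eval K P E' (p - c) p' e' v" "q' + phi v A + r \<le> p'"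
    using sound_judgementD(2)[OF sound m', of "p - c" r] h pot by auto
  then show "\<exists>p'. 0 \<le> p' \<and> eval K P E p p' e v \<and> q' + phi v A + r \<le> p'"
    using step h(1) by blast
qed

text \<open>The potential of the context of e2 is carried through the evaluation of e1 as part of the
  slack r.\<close>

lemma sound_judgement_let:
  assumes sound1: "sound_judgement K P E e1 v1 \<Gamma>1 (q - K KLet) q1 A1"
    and ann1: "ann_ok \<Gamma>1 (q - K KLet) q1 A1"
    and sound2: "sound_judgement K P (E(x \<mapsto> v1)) e2 v (\<Gamma>2(x \<mapsto> A1)) q1 q' A2"
    and ann2: "ann_ok (\<Gamma>2(x \<mapsto> A1)) q1 q' A2"
    and disj: "dom \<Gamma>1 \<inter> dom \<Gamma>2 = {}" and x: "x \<notin> dom \<Gamma>2" and fin: "finite (dom E)"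
  shows "sound_judgement K P E (ELet x e1 e2) v (\<Gamma>1 ++ \<Gamma>2) q q' A2"
proof (rule sound_judgementI)
  assume "models E (\<Gamma>1 ++ \<Gamma>2)"
  then have m1: "models E \<Gamma>1" and m2: "models E \<Gamma>2"
    using models_map_add[OF disj] by auto
  have m2': "models (E(x \<mapsto> v1)) (\<Gamma>2(x \<mapsto> A1))"
    using models_bind[OF x] m2 sound_judgementD(1)[OF sound1 m1] by simp
  show "vtype v (erase A2)" using sound_judgementD(1)[OF sound2 m2'] .
  have fin1: "finite (dom \<Gamma>1)" and fin2: "finite (dom \<Gamma>2)"
    using models_finite_dom fin m1 m2 by auto
  have nonneg2: "0 \<le> Phi_env E \<Gamma>2"
    using ann2 x unfolding ann_ok_def by (intro Phi_env_nonneg) (auto split: if_splits)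
  have nonneg1: "0 \<le> Phi_env E \<Gamma>1" "0 \<le> q - K KLet"
    using ann1 unfolding ann_ok_def by (auto intro: Phi_env_nonneg)
  fix p r :: rat assume h: "0 \<le> p" "0 \<le> r" "q + Phi_env E (\<Gamma>1 ++ \<Gamma>2) + r \<le> p"
  have split: "Phi_env E (\<Gamma>1 ++ \<Gamma>2) = Phi_env E \<Gamma>1 + Phi_env E \<Gamma>2"
    by (rule Phi_env_map_add[OF disj fin1 fin2])
  obtain p1 where p1: "0 \<le> p1" "eval K P E (p - K KLet) p1 e1 v1"
      "q1 + phi v1 A1 + (Phi_env E \<Gamma>2 + r) \<le> p1"
    using sound_judgementD(2)[OF sound1 m1, of "p - K KLet" "Phi_env E \<Gamma>2 + r"]
      h nonneg1 nonneg2 split by auto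
  moreover obtain p' where "0 \<le> p'" "eval K P (E(x \<mapsto> v1)) p1 p' e2 v" "q' + phi v A2 + r \<le> p'"
    using sound_judgementD(2)[OF sound2 m2', of p1 r] p1 h Phi_env_bind[OF x fin2] by auto
  ultimately show "\<exists>p'. 0 \<le> p' \<and> eval K P E p p' (ELet x e1 e2) v \<and> q' + phi v A2 + r \<le> p'"
    using h(1) by (blast intro: E_Let)
qed

section \<open>Soundness\<close>

lemma eval_op_vtype:
  "eval_op d v1 v2 = Some v \<Longrightarrow> vtype v (if d \<in> {OAdd, OSub, OMul, ODiv, OMod} then TInt else TBool)"
  by (cases "(d, v1, v2)" rule: eval_op.cases) (auto split: if_splits)

text \<open>Expressions whose evaluation rule has no evaluation premise (an application evaluates the
  function body).\<close>

fun atomic :: "expr \<Rightarrow> bool" where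
  "atomic (EApp f x) = False"
| "atomic (EIf x et ef) = False"
| "atomic (ELet x e1 e2) = False"
| "atomic (EMatchP x x1 x2 e) = False"
| "atomic (EMatchL x e1 xh xt e2) = False"
| "atomic (EShare x x1 x2 e) = False"
| "atomic _ = True"

inductive_cases eval_atomicE:
  "eval K P E q q' EUnit v" "eval K P E q q' ETrue v" "eval K P E q q' EFalse v"
  "eval K P E q q' (EInt n) v" "eval K P E q q' ENil v" "eval K P E q q' (EVar x) v"
  "eval K P E q q' (EOp d x1 x2) v" "eval K P E q q' (EPair x1 x2) v"
  "eval K P E q q' (ECons xh xt) v"

lemma sound_judgement_EOp:
  assumes ev: "eval K P E q0 q0' (EOp d x1 x2) v" and ann: "ann_ok \<Gamma> (K KOp) 0 B"
    and result: "erase B = (if d \<in> {OAdd, OSub, OMul, ODiv, OMod} then TInt else TBool)"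
    and "phi v B = 0"
  shows "sound_judgement K P E (EOp d x1 x2) v \<Gamma> (K KOp) 0 B"
proof -
  from ev obtain v1 v2 where args: "E x1 = Some v1" "E x2 = Some v2" "eval_op d v1 v2 = Some v"
    by (auto elim: eval_atomicE)
  show ?thesis
  proof (rule sound_judgement_axiom)
    show "eval K P E (p + K KOp) p (EOp d x1 x2) v" if "0 \<le> p" "0 \<le> p + K KOp" for p
      using args that by (rule E_Op)
    show "models E \<Gamma> \<Longrightarrow>
        vtype v (erase B) \<and> 0 \<le> phi v B \<and> K KOp + phi v B \<le> K KOp + Phi_env E \<Gamma>"
      using eval_op_vtype[OF args(3)] result \<open>phi v B = 0\<close> ann_ok_Phi_env_nonneg[OF ann] by simp
  qed
qed

lemma sound_judgement_atomic:
  assumes "typed K \<Sigma> \<Gamma> q q' e A" "eval K P E q0 q0' e v" "atomic e"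
  shows "sound_judgement K P E e v \<Gamma> q q' A"
  using assms
proof (induction arbitrary: q0 q0' rule: typed.induct)
  case T_Unit
  then show ?case by (elim eval_atomicE) (auto intro!: sound_judgement_axiom E_Unit)
next
  case T_True
  then show ?case by (elim eval_atomicE) (auto intro!: sound_judgement_axiom E_True)
next
  case T_False
  then show ?case by (elim eval_atomicE) (auto intro!: sound_judgement_axiom E_False)
next
  case T_Int
  then show ?case by (elim eval_atomicE) (auto intro!: sound_judgement_axiom E_Int)
next
  case T_Nil
  then show ?case by (elim eval_atomicE) (auto intro!: sound_judgement_axiom E_Nil)
next
  case (T_Var x A K)
  from T_Var.prems(1) have "E x = Some v"
    by (elim eval_atomicE)
  have "nonneg A"
    using T_Var.hyps by (rule ann_ok_nonneg_type)
  show ?case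
  proof (rule sound_judgement_axiom)
    show "eval K P E (p + K KVar) p (EVar x) v" if "0 \<le> p" "0 \<le> p + K KVar" for p
      using \<open>E x = Some v\<close> that by (rule E_Var)
    show "models E [x \<mapsto> A] \<Longrightarrow>
        vtype v (erase A) \<and> 0 \<le> phi v A \<and> K KVar + phi v A \<le> K KVar + Phi_env E [x \<mapsto> A]"
      using \<open>E x = Some v\<close> phi_nonneg[OF \<open>nonneg A\<close>] unfolding models_def by auto
  qed
next
  case T_OpB
  show ?case
    by (rule sound_judgement_EOp[OF T_OpB.prems(1) T_OpB.hyps(3)]) (use T_OpB.hyps(1) in auto)
next
  case T_OpCmp
  show ?case
    by (rule sound_judgement_EOp[OF T_OpCmp.prems(1) T_OpCmp.hyps(3)]) (use T_OpCmp.hyps(1) in auto)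
next
  case T_OpArith
  show ?case
    by (rule sound_judgement_EOp[OF T_OpArith.prems(1) T_OpArith.hyps(3)]) (use T_OpArith.hyps(1) in auto)
next
  case (T_Pair x1 x2 A1 A2 K)
  from T_Pair.prems(1) obtain v1 v2 where v: "v = VPair v1 v2"
    and args: "E x1 = Some v1" "E x2 = Some v2"
    by (auto elim: eval_atomicE)
  have "nonneg (AProd A1 A2)"
    using T_Pair.hyps(2) by (rule ann_ok_nonneg_type)
  show ?case
    unfolding v
  proof (rule sound_judgement_axiom)
    show "eval K P E (p + K KPair) p (EPair x1 x2) (VPair v1 v2)" if "0 \<le> p" "0 \<le> p + K KPair" for p
      using args that by (rule E_Pair)
    show "models E [x1 \<mapsto> A1, x2 \<mapsto> A2] \<Longrightarrow> vtype (VPair v1 v2) (erase (AProd A1 A2)) \<and>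
        0 \<le> phi (VPair v1 v2) (AProd A1 A2) \<and>
        K KPair + phi (VPair v1 v2) (AProd A1 A2) \<le> K KPair + Phi_env E [x1 \<mapsto> A1, x2 \<mapsto> A2]"
      unfolding models_two[OF T_Pair.hyps(1)] Phi_env_two[OF T_Pair.hyps(1)]
      using args phi_nonneg[OF \<open>nonneg (AProd A1 A2)\<close>, of "VPair v1 v2"] by auto
  qed
next
  case (T_Cons xh xt A p K)
  from T_Cons.prems(1) obtain v1 vs where v: "v = VList (v1 # vs)"
    and args: "E xh = Some v1" "E xt = Some (VList vs)"
    by (auto elim: eval_atomicE)
  have "nonneg (AList p A)"
    using T_Cons.hyps(2) by (rule ann_ok_nonneg_type)
  have phi_cons: "phi (VList (v1 # vs)) (AList p A) = p + phi v1 A + phi (VList vs) (AList p A)"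
    by (simp add: algebra_simps)
  show ?case
    unfolding v
  proof (rule sound_judgement_axiom)
    show "eval K P E (p' + K KCons) p' (ECons xh xt) (VList (v1 # vs))"
      if "0 \<le> p'" "0 \<le> p' + K KCons" for p'
      using args that by (rule E_Cons)
    show "models E [xh \<mapsto> A, xt \<mapsto> AList p A] \<Longrightarrow> vtype (VList (v1 # vs)) (erase (AList p A)) \<and>
        0 \<le> phi (VList (v1 # vs)) (AList p A) \<and>
        K KCons + phi (VList (v1 # vs)) (AList p A)
          \<le> p + K KCons + Phi_env E [xh \<mapsto> A, xt \<mapsto> AList p A]"
      unfolding models_two[OF T_Cons.hyps(1)] Phi_env_two[OF T_Cons.hyps(1)] phi_cons
      using args phi_nonneg[OF \<open>nonneg (AList p A)\<close>, of "VList (v1 # vs)"] phi_cons by auto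
  qed
qed (auto intro: sound_judgement_structural)

lemma sound_judgement_EApp:
  assumes typing: "typed K \<Sigma> \<Gamma> q q' (EApp f x) A"
    and prog: "prog_typed K \<Sigma> P" and Pf: "P f = (y, ef)" and Ex: "E x = Some u"
    and IH: "\<And>\<Gamma> q q' A. typed K \<Sigma> \<Gamma> q q' ef A \<Longrightarrow> sound_judgement K P (E(y \<mapsto> u)) ef v \<Gamma> q q' A"
  shows "sound_judgement K P E (EApp f x) v \<Gamma> q q' A"
  using typing prog IH
proof (induction \<Gamma> q q' "EApp f x" A rule: typed.induct)
  case (T_App A1 q q' A2 \<Sigma> K)
  have body: "typed K \<Sigma> [y \<mapsto> A1] q q' ef A2"
    using T_App.prems(1) T_App.hyps(1) Pf unfolding prog_typed_def by force
  show ?case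
  proof (rule sound_judgement_step[OF T_App.prems(2)[OF body] typed_ann_ok[OF body], where c = "K KApp"])
    show "models E [x \<mapsto> A1] \<Longrightarrow> models (E(y \<mapsto> u)) [y \<mapsto> A1] \<and>
        q + Phi_env (E(y \<mapsto> u)) [y \<mapsto> A1] \<le> q + K KApp - K KApp + Phi_env E [x \<mapsto> A1]"
      using Ex by simp
  next
    fix p p' assume "eval K P (E(y \<mapsto> u)) (p - K KApp) p' ef v" "0 \<le> p"
    then have "eval K P E (p - K KApp + K KApp) p' (EApp f x) v"
      using Pf Ex by (intro E_App) auto
    then show "eval K P E p p' (EApp f x) v" by simp
  qed
qed (auto intro: sound_judgement_structural)

lemma sound_judgement_EIf:
  assumes typing: "typed K \<Sigma> \<Gamma> q q' (EIf x et ef) A" and Ex: "E x = Some (VBool b)"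
    and IH: "\<And>\<Gamma> q q' A. typed K \<Sigma> \<Gamma> q q' (if b then et else ef) A \<Longrightarrow>
      sound_judgement K P E (if b then et else ef) v \<Gamma> q q' A"
  shows "sound_judgement K P E (EIf x et ef) v \<Gamma> q q' A"
  using typing IH
proof (induction \<Gamma> q q' "EIf x et ef" A rule: typed.induct)
  case (T_If K \<Sigma> \<Gamma> q q' A)
  have branch: "typed K \<Sigma> \<Gamma> (q - K KCond) q' (if b then et else ef) A"
    using T_If.hyps(1,3) by simp
  show ?case
  proof (rule sound_judgement_step[OF T_If.prems[OF branch] typed_ann_ok[OF branch], where c = "K KCond"])
    show "models E (\<Gamma>(x \<mapsto> ABool)) \<Longrightarrow> models E \<Gamma> \<and>
        q - K KCond + Phi_env E \<Gamma> \<le> q - K KCond + Phi_env E (\<Gamma>(x \<mapsto> ABool))"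
      using T_If.hyps(5) Phi_env_le_upd[of x \<Gamma> E ABool] by (simp add: models_upd)
  next
    fix p p' assume "eval K P E (p - K KCond) p' (if b then et else ef) v" "0 \<le> p"
    then show "eval K P E p p' (EIf x et ef) v"
      using Ex by (cases b) (auto intro: E_IfT E_IfF)
  qed
qed (auto intro: sound_judgement_structural)

lemma sound_judgement_ELet:
  assumes typing: "typed K \<Sigma> \<Gamma> q q' (ELet x e1 e2) A" and fin: "finite (dom E)"
    and IH1: "\<And>\<Gamma> q q' A. typed K \<Sigma> \<Gamma> q q' e1 A \<Longrightarrow> sound_judgement K P E e1 v1 \<Gamma> q q' A"
    and IH2: "\<And>\<Gamma> q q' A. typed K \<Sigma> \<Gamma> q q' e2 A \<Longrightarrow> sound_judgement K P (E(x \<mapsto> v1)) e2 v \<Gamma> q q' A"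
  shows "sound_judgement K P E (ELet x e1 e2) v \<Gamma> q q' A"
  using typing IH1 IH2
proof (induction \<Gamma> q q' "ELet x e1 e2" A rule: typed.induct)
  case (T_Let K \<Sigma> \<Gamma>1 q q1 A1 \<Gamma>2 q' A2)
  show ?case
    by (rule sound_judgement_let[OF T_Let.prems(1)[OF T_Let.hyps(1)] typed_ann_ok[OF T_Let.hyps(1)]
          T_Let.prems(2)[OF T_Let.hyps(3)] typed_ann_ok[OF T_Let.hyps(3)] T_Let.hyps(5,6) fin])
qed (auto intro: sound_judgement_structural)

lemma sound_judgement_EMatchP:
  assumes typing: "typed K \<Sigma> \<Gamma> q q' (EMatchP x x1 x2 e) A" and fin: "finite (dom E)"
    and Ex: "E x = Some (VPair v1 v2)"
    and IH: "\<And>\<Gamma> q q' A. typed K \<Sigma> \<Gamma> q q' e A \<Longrightarrow>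
      sound_judgement K P (E(x1 \<mapsto> v1, x2 \<mapsto> v2)) e v \<Gamma> q q' A"
  shows "sound_judgement K P E (EMatchP x x1 x2 e) v \<Gamma> q q' A"
  using typing IH
proof (induction \<Gamma> q q' "EMatchP x x1 x2 e" A rule: typed.induct)
  case (T_MatchP K \<Sigma> \<Gamma> A1 A2 q q' A)
  note body = T_MatchP.hyps(1)
  show ?case
  proof (rule sound_judgement_step[OF T_MatchP.prems[OF body] typed_ann_ok[OF body], where c = "K KMatchP"])
    assume "models E (\<Gamma>(x \<mapsto> AProd A1 A2))"
    then have "models E \<Gamma>" "vtype v1 (erase A1)" "vtype v2 (erase A2)"
      using models_upd[OF T_MatchP.hyps(6)] Ex by auto
    moreover have "finite (dom \<Gamma>)"
      using models_finite_dom \<open>models E \<Gamma>\<close> fin by blast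
    ultimately show "models (E(x1 \<mapsto> v1, x2 \<mapsto> v2)) (\<Gamma>(x1 \<mapsto> A1, x2 \<mapsto> A2)) \<and>
        q - K KMatchP + Phi_env (E(x1 \<mapsto> v1, x2 \<mapsto> v2)) (\<Gamma>(x1 \<mapsto> A1, x2 \<mapsto> A2))
          \<le> q - K KMatchP + Phi_env E (\<Gamma>(x \<mapsto> AProd A1 A2))"
      using T_MatchP.hyps(3-6) Ex
      by (simp add: models_bind2 Phi_env_bind2 Phi_env_upd Phi_env_fresh_upd)
  next
    fix p p' assume "eval K P (E(x1 \<mapsto> v1, x2 \<mapsto> v2)) (p - K KMatchP) p' e v" "0 \<le> p"
    then show "eval K P E p p' (EMatchP x x1 x2 e) v" using Ex by (blast intro: E_MatchP)
  qed
qed (auto intro: sound_judgement_structural)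

lemma sound_judgement_EMatchL_Nil:
  assumes typing: "typed K \<Sigma> \<Gamma> q q' (EMatchL x e1 xh xt e2) B" and Ex: "E x = Some (VList [])"
    and IH: "\<And>\<Gamma> q q' B. typed K \<Sigma> \<Gamma> q q' e1 B \<Longrightarrow> sound_judgement K P E e1 v \<Gamma> q q' B"
  shows "sound_judgement K P E (EMatchL x e1 xh xt e2) v \<Gamma> q q' B"
  using typing IH
proof (induction \<Gamma> q q' "EMatchL x e1 xh xt e2" B rule: typed.induct)
  case (T_MatchL K \<Sigma> \<Gamma> q q' B A p)
  note nil = T_MatchL.hyps(1)
  show ?case
  proof (rule sound_judgement_step[OF T_MatchL.prems[OF nil] typed_ann_ok[OF nil], where c = "K KMatchN"])
    show "models E (\<Gamma>(x \<mapsto> AList p A)) \<Longrightarrow> models E \<Gamma> \<and>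
        q - K KMatchN + Phi_env E \<Gamma> \<le> q - K KMatchN + Phi_env E (\<Gamma>(x \<mapsto> AList p A))"
      using T_MatchL.hyps(8) Ex Phi_env_le_upd[of x \<Gamma> E "AList p A"] by (simp add: models_upd)
  next
    fix p p' assume "eval K P E (p - K KMatchN) p' e1 v" "0 \<le> p"
    then show "eval K P E p p' (EMatchL x e1 xh xt e2) v" using Ex by (blast intro: E_MatchN)
  qed
qed (auto intro: sound_judgement_structural)

text \<open>The potential p of the matched cons cell pays for the increased constant.\<close>

lemma sound_judgement_EMatchL_Cons:
  assumes typing: "typed K \<Sigma> \<Gamma> q q' (EMatchL x e1 xh xt e2) B" and fin: "finite (dom E)"
    and Ex: "E x = Some (VList (v1 # vs))"
    and IH: "\<And>\<Gamma> q q' B. typed K \<Sigma> \<Gamma> q q' e2 B \<Longrightarrow>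
      sound_judgement K P (E(xh \<mapsto> v1, xt \<mapsto> VList vs)) e2 v \<Gamma> q q' B"
  shows "sound_judgement K P E (EMatchL x e1 xh xt e2) v \<Gamma> q q' B"
  using typing IH
proof (induction \<Gamma> q q' "EMatchL x e1 xh xt e2" B rule: typed.induct)
  case (T_MatchL K \<Sigma> \<Gamma> q q' B A p)
  note cons = T_MatchL.hyps(3)
  show ?case
  proof (rule sound_judgement_step[OF T_MatchL.prems[OF cons] typed_ann_ok[OF cons], where c = "K KMatchL"])
    assume "models E (\<Gamma>(x \<mapsto> AList p A))"
    then have "models E \<Gamma>" "vtype v1 (erase A)" "vtype (VList vs) (erase (AList p A))"
      using models_upd[OF T_MatchL.hyps(8)] Ex by auto
    moreover have "finite (dom \<Gamma>)"
      using models_finite_dom \<open>models E \<Gamma>\<close> fin by blast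
    ultimately show "models (E(xh \<mapsto> v1, xt \<mapsto> VList vs)) (\<Gamma>(xh \<mapsto> A, xt \<mapsto> AList p A)) \<and>
        q + p - K KMatchL + Phi_env (E(xh \<mapsto> v1, xt \<mapsto> VList vs)) (\<Gamma>(xh \<mapsto> A, xt \<mapsto> AList p A))
          \<le> q - K KMatchL + Phi_env E (\<Gamma>(x \<mapsto> AList p A))"
      using T_MatchL.hyps(5-8) Ex
      by (simp add: models_bind2 Phi_env_bind2 Phi_env_upd Phi_env_fresh_upd algebra_simps)
  next
    fix p p' assume "eval K P (E(xh \<mapsto> v1, xt \<mapsto> VList vs)) (p - K KMatchL) p' e2 v" "0 \<le> p"
    then show "eval K P E p p' (EMatchL x e1 xh xt e2) v" using Ex by (blast intro: E_MatchC)
  qed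
qed (auto intro: sound_judgement_structural)

lemma sound_judgement_EShare:
  assumes typing: "typed K \<Sigma> \<Gamma> q q' (EShare x x1 x2 e) B" and fin: "finite (dom E)"
    and Ex: "E x = Some w"
    and IH: "\<And>\<Gamma> q q' B. typed K \<Sigma> \<Gamma> q q' e B \<Longrightarrow>
      sound_judgement K P ((E(x := None))(x1 \<mapsto> w, x2 \<mapsto> w)) e v \<Gamma> q q' B"
  shows "sound_judgement K P E (EShare x x1 x2 e) v \<Gamma> q q' B"
  using typing IH
proof (induction \<Gamma> q q' "EShare x x1 x2 e" B rule: typed.induct)
  case (T_Share K \<Sigma> \<Gamma> A1 A2 q q' B A)
  note body = T_Share.hyps(1) and share = T_Share.hyps(3)
  show ?case
  proof (rule sound_judgement_step[OF T_Share.prems[OF body] typed_ann_ok[OF body], where c = 0])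
    assume "models E (\<Gamma>(x \<mapsto> A))"
    then have "models E \<Gamma>" "vtype w (erase A)"
      using models_upd[OF T_Share.hyps(7)] Ex by auto
    moreover have "finite (dom \<Gamma>)"
      using models_finite_dom \<open>models E \<Gamma>\<close> fin by blast
    ultimately show "models ((E(x := None))(x1 \<mapsto> w, x2 \<mapsto> w)) (\<Gamma>(x1 \<mapsto> A1, x2 \<mapsto> A2)) \<and>
        q + Phi_env ((E(x := None))(x1 \<mapsto> w, x2 \<mapsto> w)) (\<Gamma>(x1 \<mapsto> A1, x2 \<mapsto> A2))
          \<le> q - 0 + Phi_env E (\<Gamma>(x \<mapsto> A))"
      using T_Share.hyps(4-7) Ex share_rel_erase[OF share] share_rel_phi[OF share, of w]
      by (simp add: models_bind2 Phi_env_bind2 models_fresh_upd Phi_env_fresh_upd Phi_env_upd)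
  next
    fix p p' assume "eval K P ((E(x := None))(x1 \<mapsto> w, x2 \<mapsto> w)) (p - 0) p' e v" "0 \<le> p"
    then show "eval K P E p p' (EShare x x1 x2 e) v" using Ex by (auto intro: E_Share)
  qed
qed (auto intro: sound_judgement_structural)

lemma eval_typed_sound_judgement:
  assumes "eval K P E q0 q0' e v" "prog_typed K \<Sigma> P" "finite (dom E)" "typed K \<Sigma> \<Gamma> q q' e A"
  shows "sound_judgement K P E e v \<Gamma> q q' A"
  using assms
proof (induction arbitrary: \<Gamma> q q' A rule: eval.induct)
  case (E_App P f y ef E x u K)
  have "finite (dom (E(y \<mapsto> u)))"
    using E_App.prems(2) by simp
  then show ?case
    by (rule sound_judgement_EApp[OF E_App.prems(3,1) E_App.hyps(1,2) E_App.IH[OF E_App.prems(1)]])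
next
  case (E_Let K P E q q1 e1 v1 x q' e2 v)
  have fin: "finite (dom (E(x \<mapsto> v1)))"
    using E_Let.prems(2) by simp
  show ?case
  proof (rule sound_judgement_ELet[OF E_Let.prems(3,2)])
    show "sound_judgement K P E e1 v1 \<Gamma>' a b T" if "typed K \<Sigma> \<Gamma>' a b e1 T" for \<Gamma>' a b T
      using E_Let.IH(1)[OF E_Let.prems(1,2) that] .
    show "sound_judgement K P (E(x \<mapsto> v1)) e2 v \<Gamma>' a b T" if "typed K \<Sigma> \<Gamma>' a b e2 T" for \<Gamma>' a b T
      using E_Let.IH(2)[OF E_Let.prems(1) fin that] .
  qed
next
  case (E_IfT E x)
  then show ?case by (intro sound_judgement_EIf[where b = True]) auto
next
  case (E_IfF E x)
  then show ?case by (intro sound_judgement_EIf[where b = False]) auto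
next
  case (E_MatchP E x v1 v2 K P x1 x2)
  have "finite (dom (E(x1 \<mapsto> v1, x2 \<mapsto> v2)))"
    using E_MatchP.prems(2) by simp
  then show ?case
    by (rule sound_judgement_EMatchP[OF E_MatchP.prems(3,2) E_MatchP.hyps(1)
          E_MatchP.IH[OF E_MatchP.prems(1)]])
next
  case (E_MatchN E x)
  then show ?case by (intro sound_judgement_EMatchL_Nil) auto
next
  case (E_MatchC E x v1 vs K P xh xt)
  have "finite (dom (E(xh \<mapsto> v1, xt \<mapsto> VList vs)))"
    using E_MatchC.prems(2) by simp
  then show ?case
    by (rule sound_judgement_EMatchL_Cons[OF E_MatchC.prems(3,2) E_MatchC.hyps(1)
          E_MatchC.IH[OF E_MatchC.prems(1)]])
next
  case (E_Share E x w K P x1 x2)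
  have "finite (dom ((E(x := None))(x1 \<mapsto> w, x2 \<mapsto> w)))"
    using E_Share.prems(2) by simp
  then show ?case
    by (rule sound_judgement_EShare[OF E_Share.prems(3,2) E_Share.hyps(1)
          E_Share.IH[OF E_Share.prems(1)]])
qed (auto intro: sound_judgement_atomic eval.intros)

theorem theorem4:
  fixes K :: costs and \<Sigma> :: sig and P :: prog and E :: env and \<Gamma> :: ctx
    and e :: expr and v :: val and A :: aty and q q' p r :: rat
  assumes "wf_sig \<Sigma>"
    and "prog_typed K \<Sigma> P"
    and "finite (dom E)"
    and "models E \<Gamma>"
    and "\<exists>q0 q0'. eval K P E q0 q0' e v"
    and "typed K \<Sigma> \<Gamma> q q' e A"
    and "0 \<le> p" and "0 \<le> r"
    and "p \<ge> q + Phi_env E \<Gamma> + r"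
  shows "\<exists>p'. 0 \<le> p' \<and> eval K P E p p' e v \<and> p' \<ge> q' + phi v A + r"
proof -
  obtain q0 q0' where "eval K P E q0 q0' e v"
    using assms(5) by blast
  then have "sound_judgement K P E e v \<Gamma> q q' A"
    using assms(2,3,6) by (rule eval_typed_sound_judgement)
  then show ?thesis
    using sound_judgementD(2) assms(4,7-9) by blast
qed

end
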